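(* Let $m$ be an integer. (i) If $3m=N_1(\delta(1-x)+9A+9B(x-1))$ for some integers $A,B$ with $3\nmid A$, where $\delta=1,2,4$ according as $m\equiv 1,4,7\pmod 9$, then there is $F\in\mathbb Z[x]$ with $F(1)=9$, $N_1(F)=3m$, $N_2(F)=N_3(F)=3$ and $M_{27}(F)=3^5m$. (ii) If $m=N_2(1+(x-1)^7t(x))$ for some $t\in\mathbb Z[x]$ with $3\nmid t(1)$, then there is $F\in\mathbb Z[x]$ with $F(1)=9$, $N_2(F)=3m$, $N_1(F)=N_3(F)=3$ and $M_{27}(F)=3^5m$. (iii) If $m=N_3(1+(x-1)^7t(x))$ for some $t\in\mathbb Z[x]$ with $3\nmid t(1)$, then there is $F\in\mathbb Z[x]$ with $F(1)=9$, $N_3(F)=3m$, $N_1(F)=N_2(F)=3$ and $M_{27}(F)=3^5m$.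
   Context: $M_{27}(F)=\prod_{z^{27}=1}F(z)$. For $k\geq1$, $\omega_k=e^{2\pi i/3^k}$ and $N_k(F)=\prod_{1\leq \ell\leq 3^k,\ 3\nmid \ell}F(\omega_k^\ell)$. *)

theory Defs
  imports "HOL-Complex_Analysis.Complex_Analysis" "HOL-Computational_Algebra.Polynomial"
begin

definition cpoly :: "int poly \<Rightarrow> complex \<Rightarrow> complex" where
  "cpoly F z = poly (map_poly of_int F) z"

definition M27 :: "int poly \<Rightarrow> complex" where
  "M27 F = (\<Prod>z\<in>{z::complex. z ^ 27 = 1}. cpoly F z)"

definition omega :: "nat \<Rightarrow> complex" where
  "omega k = exp (2 * pi * \<i> / of_nat (3 ^ k))"

definition Nk :: "nat \<Rightarrow> int poly \<Rightarrow> complex" where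
  "Nk k F = (\<Prod>l\<in>{l::nat. 1 \<le> l \<and> l \<le> 3 ^ k \<and> \<not> 3 dvd l}. cpoly F (omega k ^ l))"

end

theory Submission
  imports Defs "HOL-Computational_Algebra.Fundamental_Theorem_Algebra"
begin

text \<open>Write \<open>N\<^sub>k(F)\<close> as the product of \<open>F(\<zeta>)\<close> over the primitive \<open>3\<^sup>k\<close>-th roots of
  unity \<open>\<zeta>\<close> (level \<open>k\<close>). Then \<open>M\<^sub>2\<^sub>7(F) = F(1) N\<^sub>1(F) N\<^sub>2(F) N\<^sub>3(F)\<close>, and
  \<open>N\<^sub>k(\<plusminus>(1 - x) G) = 3 N\<^sub>k(G)\<close>, because \<open>\<Phi>\<^bsub>3\<^sup>k\<^esub>(1) = 3\<close> and there is an even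
  number of conjugates. The cyclotomic polynomial \<open>\<Phi>\<^bsub>3\<^sup>i\<^esub>\<close> vanishes on level \<open>i\<close> and
  equals 3 on all lower levels, so adding multiples of the cyclotomic polynomials of the other
  levels to a unit multiple of \<open>1 - x\<close> prescribes \<open>F\<close> level by level. The integer
  multiplier of the \<open>\<Phi>\<close>-term then adjusts \<open>F(1)\<close> to 9; this is where the hypotheses
  that 3 divides neither \<open>A\<close> nor \<open>t(1)\<close> enter.\<close>

lemma map_poly_of_int_add:
  "map_poly of_int (p + q) = (map_poly of_int p + map_poly of_int q :: 'a::comm_ring_1 poly)"
  by (rule poly_eqI) (simp add: coeff_map_poly)

lemma map_poly_of_int_diff:
  "map_poly of_int (p - q) = (map_poly of_int p - map_poly of_int q :: 'a::comm_ring_1 poly)"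
  by (rule poly_eqI) (simp add: coeff_map_poly)

lemma map_poly_of_int_uminus:
  "map_poly of_int (- p) = (- map_poly of_int p :: 'a::comm_ring_1 poly)"
  by (rule poly_eqI) (simp add: coeff_map_poly)

lemma map_poly_of_int_mult:
  "map_poly of_int (p * q) = (map_poly of_int p * map_poly of_int q :: 'a::comm_ring_1 poly)"
  by (rule poly_eqI) (simp add: coeff_map_poly coeff_mult)

lemma cpoly_add [simp]: "cpoly (p + q) z = cpoly p z + cpoly q z"
  by (simp add: cpoly_def map_poly_of_int_add)

lemma cpoly_diff [simp]: "cpoly (p - q) z = cpoly p z - cpoly q z"
  by (simp add: cpoly_def map_poly_of_int_diff)

lemma cpoly_uminus [simp]: "cpoly (- p) z = - cpoly p z"
  by (simp add: cpoly_def map_poly_of_int_uminus)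

lemma cpoly_mult [simp]: "cpoly (p * q) z = cpoly p z * cpoly q z"
  by (simp add: cpoly_def map_poly_of_int_mult)

lemma cpoly_0 [simp]: "cpoly 0 z = 0"
  by (simp add: cpoly_def)

lemma cpoly_1 [simp]: "cpoly 1 z = 1"
  by (simp add: cpoly_def)

lemma cpoly_pCons [simp]: "cpoly (pCons a p) z = of_int a + z * cpoly p z"
  by (simp add: cpoly_def map_poly_pCons)

lemma cpoly_smult [simp]: "cpoly (smult a p) z = of_int a * cpoly p z"
  by (simp add: cpoly_def map_poly_smult)

lemma cpoly_power [simp]: "cpoly (p ^ n) z = cpoly p z ^ n"
  by (induction n) simp_all

lemma cpoly_1_eq: "cpoly F 1 = of_int (poly F 1)"
  by (induction F rule: pCons_induct) simp_all

text \<open>For prime \<open>p\<close> and \<open>k \<ge> 1\<close>, \<open>prim_roots p k\<close> is the set of primitive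
  \<open>p\<^sup>k\<close>-th roots of unity and \<open>cyclo p k\<close> the cyclotomic polynomial \<open>\<Phi>\<^bsub>p\<^sup>k\<^esub>\<close>;
  none of the lemmas below needs primality.\<close>
definition prim_roots :: "nat \<Rightarrow> nat \<Rightarrow> complex set" where
  "prim_roots p k = {z. z ^ p ^ k = 1 \<and> z ^ p ^ (k - 1) \<noteq> 1}"

definition cyclo :: "nat \<Rightarrow> nat \<Rightarrow> 'a::comm_ring_1 poly" where
  "cyclo p k = (\<Sum>j<p. monom 1 (j * p ^ (k - 1)))"

lemma poly_cyclo: "poly (cyclo p k) z = (\<Sum>j<p. z ^ (j * p ^ (k - 1)))"
  by (simp add: cyclo_def poly_sum poly_monom)

lemma cpoly_cyclo_eq_poly: "cpoly (cyclo p k) z = poly (cyclo p k) z"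
proof -
  have "map_poly of_int (cyclo p k) = (cyclo p k :: complex poly)"
    by (rule poly_eqI) (auto simp: cyclo_def coeff_map_poly coeff_sum intro!: sum.cong)
  then show ?thesis
    by (simp add: cpoly_def)
qed

lemma roots_unity_pow_Suc:
  "{z::complex. z ^ p ^ Suc k = 1} = {z. z ^ p ^ k = 1} \<union> prim_roots p (Suc k)"
proof -
  have "z ^ p ^ Suc k = (z ^ p ^ k) ^ p" for z :: complex
    by (simp add: power_mult[symmetric] mult.commute)
  then show ?thesis
    by (auto simp: prim_roots_def)
qed

lemma finite_prim_roots:
  assumes "p > 0"
  shows "finite (prim_roots p k)"
  by (rule finite_subset[OF _ finite_roots_unity[of "p ^ k"]])
    (use assms in \<open>auto simp: prim_roots_def\<close>)

lemma card_prim_roots: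
  assumes "p > 0"
  shows "card (prim_roots p (Suc k)) = p ^ Suc k - p ^ k"
proof -
  have "card {z::complex. z ^ p ^ Suc k = 1}
      = card {z::complex. z ^ p ^ k = 1} + card (prim_roots p (Suc k))"
    unfolding roots_unity_pow_Suc
    by (rule card_Un_disjoint)
      (use assms finite_roots_unity[of "p ^ k"] finite_prim_roots[of p "Suc k"]
           in \<open>auto simp: prim_roots_def\<close>)
  then show ?thesis
    using assms by (simp add: card_roots_unity_eq)
qed

lemma prod_prim_roots_sign:
  assumes "odd p" "k \<ge> 1" "c\<^sup>2 = 1"
  shows "(\<Prod>z\<in>prim_roots p k. c * f z) = (\<Prod>z\<in>prim_roots p k. f z)"
proof -
  obtain i where k: "k = Suc i"
    using assms(2) by (cases k) auto
  have "p ^ Suc i - p ^ i = 2 * ((p - 1) div 2 * p ^ i)"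
    using assms(1) by (auto simp: algebra_simps elim!: oddE)
  then have "c ^ card (prim_roots p k) = 1"
    using assms(1,3) by (simp add: k card_prim_roots power_mult odd_pos)
  then show ?thesis
    by (simp add: prod.distrib)
qed

lemma prod_roots_unity_pow_Suc:
  assumes "p > 0"
  shows "(\<Prod>z\<in>{z::complex. z ^ p ^ Suc k = 1}. f z)
       = (\<Prod>z\<in>{z. z ^ p ^ k = 1}. f z) * (\<Prod>z\<in>prim_roots p (Suc k). f z)"
  unfolding roots_unity_pow_Suc
  by (rule prod.union_disjoint)
    (use assms finite_roots_unity[of "p ^ k"] finite_prim_roots[of p "Suc k"]
       in \<open>auto simp: prim_roots_def\<close>)

lemma prod_roots_unity_pow:
  assumes "p > 0"
  shows "(\<Prod>z\<in>{z::complex. z ^ p ^ k = 1}. f z)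
       = f 1 * (\<Prod>i=1..k. \<Prod>z\<in>prim_roots p i. f z)"
proof (induction k)
  case 0
  then show ?case
    by simp
next
  case (Suc k)
  then show ?case
    unfolding prod_roots_unity_pow_Suc[OF assms] by (simp add: mult.assoc)
qed

lemma bij_betw_prim_roots:
  assumes "p > 0" "k \<ge> 1"
  shows "bij_betw (\<lambda>l. exp (2 * of_real pi * \<i> * of_nat l / of_nat (p ^ k)))
           {l. 1 \<le> l \<and> l \<le> p ^ k \<and> \<not> p dvd l} (prim_roots p k)"
proof -
  define n where "n = p ^ k"
  define \<zeta> :: "nat \<Rightarrow> complex"
    where "\<zeta> = (\<lambda>l. exp (2 * of_real pi * \<i> * of_nat l / of_nat n))"
  obtain i where k: "k = Suc i"
    using assms(2) by (cases k) auto
  have n: "1 \<le> n" "n = p * p ^ (k - 1)"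
    using assms(1) by (simp_all add: n_def k)
  have \<zeta>_pow: "\<zeta> l ^ j = \<zeta> (l * j)" for l j
    unfolding \<zeta>_def exp_of_nat_mult[symmetric] by (simp add: field_simps)
  have \<zeta>_pow_eq_1: "\<zeta> l ^ j = 1 \<longleftrightarrow> n dvd l * j" for l j
  proof -
    have "\<zeta> (l * j) = 1 \<longleftrightarrow> n dvd l * j"
      unfolding \<zeta>_def by (rule complex_root_unity_eq_1[OF n(1)])
    then show ?thesis
      by (simp only: \<zeta>_pow)
  qed
  have "n dvd l * p ^ (k - 1) \<longleftrightarrow> p dvd l" for l
    using assms(1) by (simp add: n(2))
  then have \<zeta>_prim: "\<zeta> l \<in> prim_roots p k \<longleftrightarrow> \<not> p dvd l" for l
    by (simp add: prim_roots_def \<zeta>_pow_eq_1 flip: n_def)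
  have "inj_on \<zeta> {l. 1 \<le> l \<and> l \<le> n \<and> \<not> p dvd l}"
  proof (rule inj_onI)
    fix a b
    assume "a \<in> {l. 1 \<le> l \<and> l \<le> n \<and> \<not> p dvd l}" "b \<in> {l. 1 \<le> l \<and> l \<le> n \<and> \<not> p dvd l}"
    then have "a < n" "b < n"
      using n(2) by (auto simp: order.order_iff_strict)
    moreover assume "\<zeta> a = \<zeta> b"
    then have "a mod n = b mod n"
      unfolding \<zeta>_def by (simp add: complex_root_unity_eq[OF n(1)])
    ultimately show "a = b"
      by simp
  qed
  moreover have "\<zeta> ` {l. 1 \<le> l \<and> l \<le> n \<and> \<not> p dvd l} = prim_roots p k"
  proof (intro equalityI subsetI)
    fix z
    assume "z \<in> prim_roots p k"
    moreover from this obtain j where "j < n" "z = \<zeta> j"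
      using complex_roots_unity[OF n(1)] by (auto simp: prim_roots_def \<zeta>_def n_def)
    ultimately have "\<not> p dvd j" "j < n" "z = \<zeta> j"
      by (simp_all add: \<zeta>_prim)
    moreover from this have "j \<noteq> 0"
      by (metis dvd_0_right)
    ultimately show "z \<in> \<zeta> ` {l. 1 \<le> l \<and> l \<le> n \<and> \<not> p dvd l}"
      by auto
  qed (auto simp: \<zeta>_prim)
  ultimately have "bij_betw \<zeta> {l. 1 \<le> l \<and> l \<le> n \<and> \<not> p dvd l} (prim_roots p k)"
    by (simp add: bij_betw_def)
  then show ?thesis
    by (simp only: \<zeta>_def n_def)
qed

lemma Nk_eq_prod_prim_roots:
  assumes "k \<ge> 1"
  shows "Nk k F = (\<Prod>z\<in>prim_roots 3 k. cpoly F z)"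
proof -
  have "omega k ^ l = exp (2 * of_real pi * \<i> * of_nat l / of_nat (3 ^ k))" for l
    unfolding omega_def exp_of_nat_mult[symmetric] by (simp add: field_simps)
  then have "Nk k F = (\<Prod>l\<in>{l. 1 \<le> l \<and> l \<le> 3 ^ k \<and> \<not> 3 dvd l}.
                 cpoly F (exp (2 * of_real pi * \<i> * of_nat l / of_nat (3 ^ k))))"
    by (simp only: Nk_def)
  also have "\<dots> = (\<Prod>z\<in>prim_roots 3 k. cpoly F z)"
    by (rule prod.reindex_bij_betw[OF bij_betw_prim_roots[OF _ assms]]) simp
  finally show ?thesis .
qed

lemma M27_eq: "M27 F = of_int (poly F 1) * Nk 1 F * Nk 2 F * Nk 3 F"
proof -
  have "{1..3::nat} = {1, 2, 3}"
    by auto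
  then have "M27 F = cpoly F 1 * (\<Prod>i\<in>{1, 2, 3}. \<Prod>z\<in>prim_roots 3 i. cpoly F z)"
    using prod_roots_unity_pow[of 3 "cpoly F" 3] by (simp add: M27_def)
  then show ?thesis
    by (simp add: Nk_eq_prod_prim_roots cpoly_1_eq mult.assoc)
qed

lemma prod_roots_unity_linear_factors:
  assumes "n > 0"
  shows "(\<Prod>z\<in>{z::complex. z ^ n = 1}. [:-z, 1:]) = monom 1 n - 1"
proof -
  define q :: "complex poly" where "q = monom 1 n - 1"
  have poly_q: "poly q z = z ^ n - 1" for z
    by (simp add: q_def poly_monom)
  have "rsquarefree q"
    unfolding rsquarefree_roots
  proof (intro allI notI)
    fix a assume "poly q a = 0 \<and> poly (pderiv q) a = 0"
    then have "a ^ n = 1" "of_nat n * a ^ (n - 1) = 0"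
      by (auto simp: poly_q q_def pderiv_diff pderiv_monom poly_monom)
    then have "a ^ n = 1" "a = 0"
      using assms by auto
    with assms show False
      by (simp add: power_0_left)
  qed
  moreover have "lead_coeff q = 1"
  proof -
    have "degree q = n"
      using degree_add_eq_left[of "-1" "monom (1::complex) n"] assms
      by (simp add: q_def degree_monom_eq)
    then show ?thesis
      using assms by (simp add: q_def)
  qed
  ultimately have "(\<Prod>z | poly q z = 0. [:-z, 1:]) = q"
    using complex_poly_decompose_rsquarefree[of q] by simp
  then show ?thesis
    by (simp add: poly_q q_def poly_monom)
qed

lemma prod_prim_roots_linear_factors:
  assumes "p > 0" "k \<ge> 1"
  shows "(\<Prod>z\<in>prim_roots p k. [:-z, 1:]) = cyclo p k"
proof -
  obtain i where k: "k = Suc i"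
    using assms(2) by (cases k) auto
  define x :: "complex poly" where "x = monom 1 (p ^ i)"
  have "x - 1 \<noteq> 0"
  proof
    assume "x - 1 = 0"
    then have "poly (x - 1) 0 = 0"
      by simp
    then show False
      using assms(1) by (simp add: x_def poly_monom power_0_left)
  qed
  moreover have "(\<Prod>z\<in>prim_roots p k. [:-z, 1:]) * (x - 1) = cyclo p k * (x - 1)"
  proof -
    have "(\<Prod>z\<in>prim_roots p k. [:-z, 1:]) * (x - 1) = monom 1 (p ^ k) - 1"
      using prod_roots_unity_pow_Suc[OF assms(1), of "\<lambda>z. [:-z, 1:]" i] assms(1)
        prod_roots_unity_linear_factors[of "p ^ i"] prod_roots_unity_linear_factors[of "p ^ k"]
      by (simp add: x_def k mult.commute)
    also have "\<dots> = x ^ p - 1"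
      by (simp add: x_def monom_power k mult.commute)
    also have "\<dots> = cyclo p k * (x - 1)"
      unfolding power_diff_1_eq by (simp add: cyclo_def x_def monom_power k mult.commute)
    finally show ?thesis .
  qed
  ultimately show ?thesis
    by simp
qed

lemma prod_prim_roots_eval:
  assumes "p > 0" "k \<ge> 1"
  shows "(\<Prod>z\<in>prim_roots p k. a - z) = poly (cyclo p k) a"
  using arg_cong[OF prod_prim_roots_linear_factors[OF assms], of "\<lambda>q. poly q a"]
  by (simp add: poly_prod)

lemma prod_prim_roots_one_minus:
  assumes "p > 0" "k \<ge> 1"
  shows "(\<Prod>z\<in>prim_roots p k. 1 - z) = of_nat p"
  using prod_prim_roots_eval[OF assms, of 1] by (simp add: poly_cyclo)

lemma poly_cyclo_prim_root:
  assumes "p > 0" "k \<ge> 1" "z \<in> prim_roots p k"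
  shows "poly (cyclo p k) z = 0"
proof -
  have "(\<Prod>w\<in>prim_roots p k. z - w) = 0"
    using assms(3) finite_prim_roots[OF assms(1)] by (intro prod_zero) auto
  then show ?thesis
    using prod_prim_roots_eval[OF assms(1,2)] by simp
qed

lemma poly_cyclo_lower_root:
  assumes "z \<in> prim_roots p i" "i < k"
  shows "poly (cyclo p k) z = of_nat p"
proof -
  have "p ^ i dvd p ^ (k - 1)"
    using assms(2) by (simp add: le_imp_power_dvd)
  then have "z ^ p ^ (k - 1) = 1"
    using assms(1) by (auto simp: prim_roots_def power_mult)
  then have "z ^ (j * p ^ (k - 1)) = 1" for j
    by (metis mult.commute power_mult power_one)
  then show ?thesis
    by (simp add: poly_cyclo)
qed

lemma cpoly_cyclo3: "cpoly (cyclo 3 k) z = 1 + z ^ 3 ^ (k - 1) + z ^ (2 * 3 ^ (k - 1))"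
proof -
  have "{..<3::nat} = {0, 1, 2}"
    by auto
  then show ?thesis
    by (simp add: cpoly_cyclo_eq_poly poly_cyclo)
qed

lemma poly_cyclo_1: "poly (cyclo p k) 1 = of_nat p"
  by (simp add: poly_cyclo)

lemma cpoly_cyclo3_prim_root:
  assumes "k \<ge> 1" "z \<in> prim_roots 3 k"
  shows "cpoly (cyclo 3 k) z = 0"
  using poly_cyclo_prim_root[of 3 k z] assms by (simp add: cpoly_cyclo_eq_poly)

lemma cpoly_cyclo3_lower_root:
  assumes "z \<in> prim_roots 3 i" "i < k"
  shows "cpoly (cyclo 3 k) z = 3"
  using poly_cyclo_lower_root[OF assms] by (simp add: cpoly_cyclo_eq_poly)

lemma prim_roots3_eq_0:
  assumes "k \<ge> 1" "z \<in> prim_roots 3 k"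
  shows "1 + z ^ 3 ^ (k - 1) + z ^ (2 * 3 ^ (k - 1)) = 0"
  using cpoly_cyclo3_prim_root[OF assms] by (simp add: cpoly_cyclo3)

lemma Nk_1 [simp]: "Nk k 1 = 1"
  by (simp add: Nk_def)

lemma Nk_power: "Nk k (F ^ n) = Nk k F ^ n"
  by (simp add: Nk_def prod_power_distrib)

lemma Nk_unit_mult:
  assumes "k \<ge> 1" "c\<^sup>2 = 1" "\<forall>z\<in>prim_roots 3 k. cpoly F z = c * cpoly G z"
  shows "Nk k F = Nk k G"
proof -
  have "Nk k F = (\<Prod>z\<in>prim_roots 3 k. c * cpoly G z)"
    using assms(3) by (simp add: Nk_eq_prod_prim_roots[OF assms(1)])
  also have "\<dots> = Nk k G"
    using prod_prim_roots_sign[of 3 k c] assms(1,2) by (simp add: Nk_eq_prod_prim_roots)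
  finally show ?thesis .
qed

lemma Nk_unit_mult_one_minus:
  assumes "k \<ge> 1" "c\<^sup>2 = 1" "\<forall>z\<in>prim_roots 3 k. cpoly F z = c * (1 - z) * cpoly G z"
  shows "Nk k F = 3 * Nk k G"
proof -
  have "Nk k F = (\<Prod>z\<in>prim_roots 3 k. c * ((1 - z) * cpoly G z))"
    using assms(3) by (simp add: Nk_eq_prod_prim_roots[OF assms(1)] mult.assoc)
  also have "\<dots> = (\<Prod>z\<in>prim_roots 3 k. 1 - z) * Nk k G"
    using prod_prim_roots_sign[of 3 k c] assms(1,2)
    by (simp add: Nk_eq_prod_prim_roots prod.distrib)
  also have "\<dots> = 3 * Nk k G"
    using prod_prim_roots_one_minus[of 3 k] assms(1) by simp
  finally show ?thesis .
qed

lemma Nk3_unit: "Nk 3 [:1, 1, 1, 1:] = 1"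
proof -
  have "cpoly [:1, 1, 1, 1:] z = (-1) * ((-1 - z) * (\<i> - z) * (-\<i> - z))" for z
    by (simp add: algebra_simps)
  then have "Nk 3 [:1, 1, 1, 1:]
      = (\<Prod>z\<in>prim_roots 3 3. (-1) * ((-1 - z) * (\<i> - z) * (-\<i> - z)))"
    by (simp only: Nk_eq_prod_prim_roots[of 3, simplified])
  also have "\<dots> = (\<Prod>z\<in>prim_roots 3 3. -1 - z) * (\<Prod>z\<in>prim_roots 3 3. \<i> - z)
      * (\<Prod>z\<in>prim_roots 3 3. -\<i> - z)"
    by (subst prod_prim_roots_sign) (simp_all add: prod.distrib)
  also have "\<dots> = poly (cyclo 3 3) (-1) * poly (cyclo 3 3) \<i> * poly (cyclo 3 3) (-\<i>)"
    by (simp add: prod_prim_roots_eval)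
  also have "\<dots> = 1"
    by (simp add: poly_cyclo numeral_3_eq_3 power_mult_distrib power_mult[symmetric])
  finally show ?thesis .
qed

lemma int_not_dvd_3_sign:
  fixes a :: int
  assumes "\<not> 3 dvd a"
  obtains s where "s = 1 \<or> s = -1" "3 dvd a - s"
proof (cases "3 dvd a - 1")
  case False
  then have "3 dvd a - (-1)"
    using assms by presburger
  then show ?thesis
    using that by blast
qed (use that in blast)

lemma exists_poly_norm_at_level:
  fixes Q w t :: "int poly"
  assumes j: "j \<in> {1, 2, 3}"
    and Q_vanishes: "\<forall>i\<in>{1, 2, 3} - {j}. \<forall>z\<in>prim_roots 3 i. cpoly Q z = 0"
    and Q_1: "poly Q 1 = 9"
    and Q_w: "\<forall>z\<in>prim_roots 3 j. cpoly Q z * cpoly w z = (z - 1) ^ 8"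
    and w_t: "\<not> 3 dvd poly w 1 * poly t 1"
  shows "\<exists>F. poly F 1 = 9 \<and> Nk j F = 3 * Nk j (1 + [:-1, 1:] ^ 7 * t) \<and>
             (\<forall>i\<in>{1, 2, 3} - {j}. Nk i F = 3)"
proof -
  obtain s where s: "s = 1 \<or> s = -1" "3 dvd poly w 1 * poly t 1 - s"
    using int_not_dvd_3_sign[OF w_t] by blast
  define e where "e = - s"
  define h where "h = (1 + e * poly w 1 * poly t 1) div 3"
  have h: "3 * h = 1 + e * poly w 1 * poly t 1"
  proof -
    obtain q where "poly w 1 * poly t 1 = s + 3 * q"
      using s(2) by (metis dvdE eq_diff_eq add.commute)
    then have "1 + e * poly w 1 * poly t 1 = 3 * (- s * q)"
      using s(1) by (auto simp: e_def algebra_simps)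
    then show ?thesis
      by (simp add: h_def)
  qed
  have e: "(of_int e :: complex)\<^sup>2 = 1"
    using s(1) by (auto simp: e_def)
  text \<open>Where \<open>Q\<close> vanishes, \<open>F\<close> is the unit multiple \<open>e (1 - x)\<close>; on level \<open>j\<close> the
    \<open>h\<close>-term dies and \<open>Q w = (x - 1)\<^sup>8\<close> turns \<open>F\<close> into \<open>e (1 - x) (1 + (x - 1)\<^sup>7 t)\<close>.\<close>
  define F where "F = smult e [:1, -1:] + Q * (smult (- e) (w * t) + smult h (cyclo 3 j))"
  have "poly F 1 = 9 * (- e * poly w 1 * poly t 1 + 3 * h)"
    by (simp add: F_def Q_1 poly_cyclo_1 algebra_simps)
  then have "poly F 1 = 9"
    by (simp add: h)
  moreover have "Nk j F = 3 * Nk j (1 + [:-1, 1:] ^ 7 * t)"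
  proof (rule Nk_unit_mult_one_minus[OF _ e])
    show "\<forall>z\<in>prim_roots 3 j.
      cpoly F z = of_int e * (1 - z) * cpoly (1 + [:-1, 1:] ^ 7 * t) z"
    proof
      fix z
      assume z: "z \<in> prim_roots 3 j"
      have "cpoly (cyclo 3 j) z = 0"
        using cpoly_cyclo3_prim_root[of j z] j z by auto
      then have "cpoly F z
          = of_int e * (1 - z) - of_int e * (cpoly Q z * cpoly w z) * cpoly t z"
        by (simp add: F_def algebra_simps)
      also have "\<dots> = of_int e * (1 - z) - of_int e * (z - 1) ^ 8 * cpoly t z"
        using Q_w z by simp
      also have "\<dots> = of_int e * (1 - z) * cpoly (1 + [:-1, 1:] ^ 7 * t) z"
        by simp algebra
      finally show "cpoly F z = of_int e * (1 - z) * cpoly (1 + [:-1, 1:] ^ 7 * t) z" .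
    qed
  qed (use j in auto)
  moreover have "Nk i F = 3" if i: "i \<in> {1, 2, 3} - {j}" for i
  proof -
    have "Nk i F = 3 * Nk i 1"
    proof (rule Nk_unit_mult_one_minus[OF _ e])
      show "\<forall>z\<in>prim_roots 3 i. cpoly F z = of_int e * (1 - z) * cpoly 1 z"
        using Q_vanishes i by (simp add: F_def algebra_simps)
    qed (use i in auto)
    then show ?thesis
      by simp
  qed
  ultimately show ?thesis
    by blast
qed

lemma exists_poly_norm_at_level1_of_unit:
  fixes s \<delta> A B :: int and V K\<^sub>0 :: "int poly"
  assumes s: "s = 1 \<or> s = -1"
    and V_level3: "Nk 3 V = 1"
    and V_level2: "\<forall>z\<in>prim_roots 3 2. cpoly V z = 1"
    and V_level1: "\<forall>z\<in>prim_roots 3 1.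
      of_int s * (1 - z) * cpoly V z + 9 * cpoly K\<^sub>0 z = of_int \<delta> * (1 - z) + 9"
    and K\<^sub>0_1: "poly K\<^sub>0 1 = 1"
    and A: "\<not> 3 dvd A"
  shows "\<exists>F. poly F 1 = 9 \<and> Nk 1 F = Nk 1 ([:\<delta>, -\<delta>:] + [:9 * A:] + smult (9 * B) [:-1, 1:]) \<and>
             Nk 2 F = 3 \<and> Nk 3 F = 3"
    (is "\<exists>F. _ \<and> Nk 1 F = Nk 1 ?G \<and> _")
proof -
  obtain n where n: "n = 1 \<or> n = -1" "3 dvd A - n"
    using int_not_dvd_3_sign[OF A] by blast
  obtain r where r: "A = n + 3 * r"
    using n(2) by (metis dvdE eq_diff_eq add.commute)
  define c where "c = n * s"
  have n2: "(of_int n :: complex)\<^sup>2 = 1" and c2: "(of_int c :: complex)\<^sup>2 = 1"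
    using n(1) s by (auto simp: c_def)
  text \<open>\<open>\<Phi>\<^sub>9 \<Phi>\<^sub>2\<^sub>7\<close> vanishes on levels 2 and 3 and equals 9 on level 1, where
    \<open>K\<close> turns \<open>F\<close> into \<open>n\<close> times the given polynomial; \<open>[:3:] - \<Phi>\<^sub>3\<close> is 3 there
    and 0 at 1.\<close>
  define K
    where "K = [:1 - n:] + smult n (K\<^sub>0 + smult r ([:3:] - cyclo 3 1) + smult B [:-1, 1:])"
  define F where "F = smult c ([:1, -1:] * V) + cyclo 3 2 * cyclo 3 3 * K"
  have "poly F 1 = 9"
    by (simp add: F_def K_def K\<^sub>0_1 poly_cyclo_1)
  moreover have "Nk 1 F = Nk 1 ?G"
  proof (rule Nk_unit_mult[OF _ n2])
    show "\<forall>z\<in>prim_roots 3 1. cpoly F z = of_int n * cpoly ?G z"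
    proof
      fix z
      assume z: "z \<in> prim_roots 3 1"
      have "cpoly F z = of_int n * (of_int s * (1 - z) * cpoly V z + 9 * cpoly K\<^sub>0 z)
          + 9 * (1 - of_int n) + 27 * of_int n * of_int r + 9 * of_int n * of_int B * (z - 1)"
        using cpoly_cyclo3_prim_root[of 1 z] cpoly_cyclo3_lower_root[of z 1 2]
          cpoly_cyclo3_lower_root[of z 1 3] z
        by (simp add: F_def K_def c_def algebra_simps)
      also have "\<dots> = of_int n * (of_int \<delta> * (1 - z) + 9)
          + 9 * (1 - of_int n) + 27 * of_int n * of_int r + 9 * of_int n * of_int B * (z - 1)"
        using V_level1 z by simp
      also have "\<dots> = of_int n * cpoly ?G z"
        using n2 by (simp add: r) algebra
      finally show "cpoly F z = of_int n * cpoly ?G z" .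
    qed
  qed simp
  moreover have "Nk 2 F = 3 * Nk 2 1"
  proof (rule Nk_unit_mult_one_minus[OF _ c2])
    show "\<forall>z\<in>prim_roots 3 2. cpoly F z = of_int c * (1 - z) * cpoly 1 z"
      using cpoly_cyclo3_prim_root[of 2] V_level2 by (simp add: F_def)
  qed simp
  moreover have "Nk 3 F = 3 * Nk 3 V"
  proof (rule Nk_unit_mult_one_minus[OF _ c2])
    show "\<forall>z\<in>prim_roots 3 3. cpoly F z = of_int c * (1 - z) * cpoly V z"
      using cpoly_cyclo3_prim_root[of 3] by (simp add: F_def algebra_simps)
  qed simp
  ultimately show ?thesis
    using V_level3 by auto
qed

lemma level1_unit_witness:
  fixes \<delta> :: int
  assumes "\<delta> \<in> {1, 2, 4}"
  obtains s V K\<^sub>0 where "s = 1 \<or> s = -1" "Nk 3 V = 1" "\<forall>z\<in>prim_roots 3 2. cpoly V z = 1"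
    "\<forall>z\<in>prim_roots 3 1.
       of_int s * (1 - z) * cpoly V z + 9 * cpoly K\<^sub>0 z = of_int \<delta> * (1 - z) + 9"
    "poly K\<^sub>0 1 = 1"
proof -
  text \<open>\<open>V\<close> is a power of the unit \<open>(x\<^sup>4 - 1)/(x - 1)\<close>, whose cube is \<open>1\<close> modulo 3 on
    level 2, corrected there to exactly 1 by a multiple of \<open>\<Phi>\<^sub>2\<^sub>7\<close>, which is 3 on
    level 2 and 0 on level 3.\<close>
  have Nk3: "Nk 3 ([:1, 1, 1, 1:] ^ m + cyclo 3 3 * y) = 1" for m y
  proof -
    have "Nk 3 ([:1, 1, 1, 1:] ^ m + cyclo 3 3 * y) = Nk 3 ([:1, 1, 1, 1:] ^ m)"
      by (rule Nk_unit_mult[where c = 1]) (simp_all add: cpoly_cyclo3_prim_root)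
    then show ?thesis
      by (simp add: Nk_power Nk3_unit)
  qed
  have level1: "1 + z + z\<^sup>2 = 0" "cpoly (cyclo 3 3) z = 3" if "z \<in> prim_roots 3 1" for z
    using prim_roots3_eq_0[of 1 z] cpoly_cyclo3_lower_root[of z 1 3] that by simp_all
  have level2: "1 + z ^ 3 + z ^ 6 = 0" "cpoly (cyclo 3 3) z = 3" if "z \<in> prim_roots 3 2" for z
    using prim_roots3_eq_0[of 2 z] cpoly_cyclo3_lower_root[of z 2 3] that by simp_all
  consider "\<delta> = 1" | "\<delta> = 4" | "\<delta> = 2"
    using assms by auto
  then show ?thesis
  proof cases
    case 1
    then show ?thesis
      by (intro that[of 1 1 1]) simp_all
  next
    case 2
    define V :: "int poly" where "V = [:1, 1, 1, 1:] ^ 3 + cyclo 3 3 * [:3, 1, -1, 0, -2, -3:]"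
    have "cpoly V z = 1" if "z \<in> prim_roots 3 2" for z
      using level2[OF that] by (simp add: V_def) algebra
    moreover have "1 * (1 - z) * cpoly V z + 9 * cpoly [:-1, 1, 1:] z = 4 * (1 - z) + 9"
      if "z \<in> prim_roots 3 1" for z
      using level1[OF that] by (simp add: V_def) algebra
    moreover have "Nk 3 V = 1"
      unfolding V_def by (rule Nk3)
    ultimately show ?thesis
      by (intro that[of 1 V "[:-1, 1, 1:]"]) (simp_all add: 2)
  next
    case 3
    define V :: "int poly" where "V = [:1, 1, 1, 1:] ^ 6 + cyclo 3 3 * [:-63, -25, 25, 0, 47, 72:]"
    have "cpoly V z = 1" if "z \<in> prim_roots 3 2" for z
      using level2[OF that] by (simp add: V_def) algebra
    moreover have "(-1) * (1 - z) * cpoly V z + 9 * cpoly [:-52, 28, 25:] z = 2 * (1 - z) + 9"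
      if "z \<in> prim_roots 3 1" for z
      using level1[OF that] by (simp add: V_def) algebra
    moreover have "Nk 3 V = 1"
      unfolding V_def by (rule Nk3)
    ultimately show ?thesis
      by (intro that[of "-1" V "[:-52, 28, 25:]"]) (simp_all add: 3)
  qed
qed

lemma exists_poly_norm_at_level1:
  fixes \<delta> A B :: int
  assumes "\<delta> \<in> {1, 2, 4}" "\<not> 3 dvd A"
  shows "\<exists>F. poly F 1 = 9 \<and> Nk 1 F = Nk 1 ([:\<delta>, -\<delta>:] + [:9 * A:] + smult (9 * B) [:-1, 1:]) \<and>
             Nk 2 F = 3 \<and> Nk 3 F = 3"
proof -
  obtain s V K\<^sub>0 where "s = 1 \<or> s = -1" "Nk 3 V = 1" "\<forall>z\<in>prim_roots 3 2. cpoly V z = 1"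
    "\<forall>z\<in>prim_roots 3 1.
       of_int s * (1 - z) * cpoly V z + 9 * cpoly K\<^sub>0 z = of_int \<delta> * (1 - z) + 9"
    "poly K\<^sub>0 1 = 1"
    using level1_unit_witness[OF assms(1)] by blast
  then show ?thesis
    using exists_poly_norm_at_level1_of_unit[OF _ _ _ _ _ assms(2)] by blast
qed

lemma exists_poly_norm_at_level2:
  fixes t :: "int poly"
  assumes "\<not> 3 dvd poly t 1"
  shows "\<exists>F. poly F 1 = 9 \<and> Nk 2 F = 3 * Nk 2 (1 + [:-1, 1:] ^ 7 * t) \<and> Nk 1 F = 3 \<and> Nk 3 F = 3"
proof -
  define w :: "int poly" where "w = [:0, -12, 21, -28, 21, -12:]"
  have "\<exists>F. poly F 1 = 9 \<and> Nk 2 F = 3 * Nk 2 (1 + [:-1, 1:] ^ 7 * t) \<and>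
            (\<forall>i\<in>{1, 2, 3} - {2}. Nk i F = 3)"
  proof (rule exists_poly_norm_at_level[where Q = "cyclo 3 1 * cyclo 3 3" and w = w])
    show "\<forall>i\<in>{1, 2, 3} - {2}. \<forall>z\<in>prim_roots 3 i. cpoly (cyclo 3 1 * cyclo 3 3) z = 0"
      using cpoly_cyclo3_prim_root[of 1] cpoly_cyclo3_prim_root[of 3] by auto
    show "\<forall>z\<in>prim_roots 3 2. cpoly (cyclo 3 1 * cyclo 3 3) z * cpoly w z = (z - 1) ^ 8"
    proof
      fix z
      assume z: "z \<in> prim_roots 3 2"
      show "cpoly (cyclo 3 1 * cyclo 3 3) z * cpoly w z = (z - 1) ^ 8"
        using prim_roots3_eq_0[of 2 z] cpoly_cyclo3_lower_root[of z 2 3] z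
        by (simp add: w_def cpoly_cyclo3) algebra
    qed
    show "\<not> 3 dvd poly w 1 * poly t 1"
      using assms by (simp add: w_def) presburger
  qed (simp_all add: poly_cyclo_1)
  then show ?thesis
    by auto
qed

lemma exists_poly_norm_at_level3:
  fixes t :: "int poly"
  assumes "\<not> 3 dvd poly t 1"
  shows "\<exists>F. poly F 1 = 9 \<and> Nk 3 F = 3 * Nk 3 (1 + [:-1, 1:] ^ 7 * t) \<and> Nk 1 F = 3 \<and> Nk 2 F = 3"
proof -
  define w :: "int poly" where
    "w = [:1, -6, 24, -56, 84, -84, 56, -24, 6, 0, -3, 12, -28, 42, -42, 28, -12, 3:]"
  have "\<exists>F. poly F 1 = 9 \<and> Nk 3 F = 3 * Nk 3 (1 + [:-1, 1:] ^ 7 * t) \<and>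
            (\<forall>i\<in>{1, 2, 3} - {3}. Nk i F = 3)"
  proof (rule exists_poly_norm_at_level[where Q = "cyclo 3 1 * cyclo 3 2" and w = w])
    show "\<forall>i\<in>{1, 2, 3} - {3}. \<forall>z\<in>prim_roots 3 i. cpoly (cyclo 3 1 * cyclo 3 2) z = 0"
      using cpoly_cyclo3_prim_root[of 1] cpoly_cyclo3_prim_root[of 2] by auto
    have "cpoly (cyclo 3 1 * cyclo 3 2) z * cpoly w z
        = (z - 1) ^ 8 + cpoly (cyclo 3 3) z * cpoly [:0, 3, -9, 19, -23, 19, -9, 3:] z" for z
      by (simp add: w_def cpoly_cyclo3) algebra
    then show "\<forall>z\<in>prim_roots 3 3. cpoly (cyclo 3 1 * cyclo 3 2) z * cpoly w z = (z - 1) ^ 8"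
      using cpoly_cyclo3_prim_root[of 3] by simp
    show "\<not> 3 dvd poly w 1 * poly t 1"
      using assms by (simp add: w_def)
  qed (simp_all add: poly_cyclo_1)
  then show ?thesis
    by auto
qed

theorem lemma4p6:
  fixes m :: int
  shows
  "(\<forall>(\<delta>::int) (A::int) (B::int).
      ((m mod 9 = 1 \<and> \<delta> = 1) \<or> (m mod 9 = 4 \<and> \<delta> = 2) \<or> (m mod 9 = 7 \<and> \<delta> = 4)) \<and>
      \<not> 3 dvd A \<and>
      of_int (3 * m) = Nk 1 ([:\<delta>, -\<delta>:] + [:9 * A:] + smult (9 * B) [:-1, 1:])
      \<longrightarrow> (\<exists>F :: int poly. poly F 1 = 9 \<and> Nk 1 F = of_int (3 * m) \<and>
              Nk 2 F = 3 \<and> Nk 3 F = 3 \<and> M27 F = of_int (3 ^ 5 * m)))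
   \<and>
   (\<forall>t :: int poly.
      \<not> 3 dvd poly t 1 \<and> of_int m = Nk 2 (1 + [:-1, 1:] ^ 7 * t)
      \<longrightarrow> (\<exists>F :: int poly. poly F 1 = 9 \<and> Nk 2 F = of_int (3 * m) \<and>
              Nk 1 F = 3 \<and> Nk 3 F = 3 \<and> M27 F = of_int (3 ^ 5 * m)))
   \<and>
   (\<forall>t :: int poly.
      \<not> 3 dvd poly t 1 \<and> of_int m = Nk 3 (1 + [:-1, 1:] ^ 7 * t)
      \<longrightarrow> (\<exists>F :: int poly. poly F 1 = 9 \<and> Nk 3 F = of_int (3 * m) \<and>
              Nk 1 F = 3 \<and> Nk 2 F = 3 \<and> M27 F = of_int (3 ^ 5 * m)))"
proof (intro conjI allI impI, goal_cases)
  case (1 \<delta> A B)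
  then have "\<delta> \<in> {1, 2, 4}" "\<not> 3 dvd A"
    by auto
  then obtain F where "poly F 1 = 9" "Nk 1 F = Nk 1 ([:\<delta>, -\<delta>:] + [:9 * A:] + smult (9 * B) [:-1, 1:])"
    "Nk 2 F = 3" "Nk 3 F = 3"
    using exists_poly_norm_at_level1 by blast
  with 1 show ?case
    by (intro exI[of _ F]) (simp add: M27_eq)
next
  case (2 t)
  then obtain F where "poly F 1 = 9" "Nk 2 F = 3 * Nk 2 (1 + [:-1, 1:] ^ 7 * t)"
    "Nk 1 F = 3" "Nk 3 F = 3"
    using exists_poly_norm_at_level2 by blast
  with 2 show ?case
    by (intro exI[of _ F]) (simp add: M27_eq)
next
  case (3 t)
  then obtain F where "poly F 1 = 9" "Nk 3 F = 3 * Nk 3 (1 + [:-1, 1:] ^ 7 * t)"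
    "Nk 1 F = 3" "Nk 2 F = 3"
    using exists_poly_norm_at_level3 by blast
  with 3 show ?case
    by (intro exI[of _ F]) (simp add: M27_eq)
qed

end
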